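(* The graph $G_p$ is isomorphic to the Cayley graph $\mathrm{Cay}(S_4,\mathcal{C})$, where $\mathcal{C}$ is the set of elements of order exactly $2$ in the symmetric group $S_4$.
   Context: For a group $G$ and an inverse-closed subset $\mathcal{C}\subseteq G$ not containing the identity, the Cayley graph $\mathrm{Cay}(G,\mathcal{C})$ has vertex set $G$, with $g$ and $h$ adjacent iff $hg^{-1}\in\mathcal{C}$. $G_p$ is the orthogonality graph of the following 24 vectors in $\mathbb{R}^4$ (vertices are the vectors; two are adjacent iff their standard inner product is $0$): $(1,0,0,0),(0,1,0,0),(0,0,1,0),(0,0,0,1)$; $(0,1,1,0),(1,0,0,-1),(1,0,0,1),(0,1,-1,0)$; $(1,1,1,1),(1,-1,1,-1),(1,-1,-1,1),(1,1,-1,-1)$; $(1,-1,0,0),(1,1,0,0),(0,0,1,1),(0,0,1,-1)$; $(-1,1,1,1),(1,1,1,-1),(1,-1,1,1),(1,1,-1,1)$; $(1,0,1,0),(0,1,0,1),(1,0,-1,0),(0,1,0,-1)$. *)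

theory Defs
  imports "HOL-Algebra.Sym_Groups" "HOL-Algebra.Multiplicative_Group"
begin

definition Gp_vectors :: "real list list" where
  "Gp_vectors =
    [[1,0,0,0],[0,1,0,0],[0,0,1,0],[0,0,0,1],
     [0,1,1,0],[1,0,0,-1],[1,0,0,1],[0,1,-1,0],
     [1,1,1,1],[1,-1,1,-1],[1,-1,-1,1],[1,1,-1,-1],
     [1,-1,0,0],[1,1,0,0],[0,0,1,1],[0,0,1,-1],
     [-1,1,1,1],[1,1,1,-1],[1,-1,1,1],[1,1,-1,1],
     [1,0,1,0],[0,1,0,1],[1,0,-1,0],[0,1,0,-1]]"

definition Gp_V :: "real list set" where
  "Gp_V = set Gp_vectors"

definition inner_list :: "real list \<Rightarrow> real list \<Rightarrow> real" where
  "inner_list u v = (\<Sum>(a, b) \<leftarrow> zip u v. a * b)"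

definition Gp_adj :: "real list \<Rightarrow> real list \<Rightarrow> bool" where
  "Gp_adj u v \<longleftrightarrow> inner_list u v = 0"

definition cayley_adj :: "('a, 'b) monoid_scheme \<Rightarrow> 'a set \<Rightarrow> 'a \<Rightarrow> 'a \<Rightarrow> bool" where
  "cayley_adj G C g h \<longleftrightarrow> h \<otimes>\<^bsub>G\<^esub> inv\<^bsub>G\<^esub> g \<in> C"

definition graph_iso :: "'a set \<Rightarrow> ('a \<Rightarrow> 'a \<Rightarrow> bool) \<Rightarrow> 'b set \<Rightarrow> ('b \<Rightarrow> 'b \<Rightarrow> bool) \<Rightarrow> bool" where
  "graph_iso V E W F \<longleftrightarrow>
     (\<exists>f. bij_betw f V W \<and> (\<forall>u\<in>V. \<forall>v\<in>V. E u v \<longleftrightarrow> F (f u) (f v)))"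

definition S4_order2 :: "(nat \<Rightarrow> nat) set" where
  "S4_order2 = {g \<in> carrier (sym_group 4). group.ord (sym_group 4) g = 2}"

end

theory Submission
  imports Defs "HOL-Combinatorics.Multiset_Permutations"
begin

text \<open>The 24 vectors fall into six orthogonal bases, i.e. six 4-cliques of \<open>G\<^sub>p\<close>. In
  \<open>Cay(S\<^sub>4, C)\<close> the cosets of the Klein four-group \<open>V\<^sub>4\<close> are 4-cliques, because two elements
  of a coset differ by an element of \<open>V\<^sub>4 - {1}\<close>, all of which are involutions. An explicit
  labelling of the vectors by permutations, sending the bases to the cosets, is then checked
  to be a graph isomorphism by computation. To make that computation inverse-free, adjacency
  of \<open>g\<close> and \<open>h\<close> in the Cayley graph is rewritten as: \<open>g \<noteq> h\<close>, and \<open>g x = h j\<close> implies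
  \<open>h x = g j\<close>.\<close>

lemma graph_iso_via_bij:
  assumes "graph_iso V E W (\<lambda>a b. F (g a) (g b))" and "bij_betw g W X"
  shows "graph_iso V E X F"
proof -
  obtain f where f: "bij_betw f V W" and adj: "\<forall>u\<in>V. \<forall>v\<in>V. E u v \<longleftrightarrow> F (g (f u)) (g (f v))"
    using assms(1) unfolding graph_iso_def by blast
  have "bij_betw (g \<circ> f) V X"
    using f assms(2) by (rule bij_betw_trans)
  with adj show ?thesis
    unfolding graph_iso_def by auto
qed

lemma graph_iso_zip:
  assumes "distinct xs" and "distinct ys" and "length xs = length ys"
    and "\<And>u a v b. (u, a) \<in> set (zip xs ys) \<Longrightarrow> (v, b) \<in> set (zip xs ys) \<Longrightarrow>
      E u v \<longleftrightarrow> F a b"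
  shows "graph_iso (set xs) E (set ys) F"
proof -
  define f where "f u = the (map_of (zip xs ys) u)" for u
  have f_nth: "f (xs ! i) = ys ! i" if "i < length xs" for i
    using map_of_zip_nth[OF assms(3,1)] that assms(3) by (simp add: f_def)
  have pair: "(xs ! i, ys ! i) \<in> set (zip xs ys)" if "i < length xs" for i
    using that assms(3) by (metis in_set_zip fst_conv snd_conv)
  have "bij_betw f (set xs) (set ys)"
  proof (rule bij_betw_imageI)
    show "inj_on f (set xs)"
      using assms(2,3) f_nth by (auto simp: inj_on_def in_set_conv_nth nth_eq_iff_index_eq)
    have "f ` set xs = f ` (!) xs ` {..<length xs}"
      by (auto simp: set_conv_nth)
    also have "\<dots> = (!) ys ` {..<length ys}"
      using assms(3) f_nth by (simp add: image_image)
    also have "\<dots> = set ys"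
      by (auto simp: set_conv_nth)
    finally show "f ` set xs = set ys" .
  qed
  moreover have "E (xs ! i) (xs ! j) \<longleftrightarrow> F (f (xs ! i)) (f (xs ! j))"
    if "i < length xs" "j < length xs" for i j
    using assms(4)[OF pair[OF that(1)] pair[OF that(2)]] f_nth that by simp
  ultimately show ?thesis
    unfolding graph_iso_def by (metis in_set_conv_nth)
qed

lemma (in group) ord_eq_2_iff:
  assumes "x \<in> carrier G"
  shows "ord x = 2 \<longleftrightarrow> x \<noteq> \<one> \<and> x \<otimes> x = \<one>"
proof -
  have "x \<otimes> x = x [^] (2::nat)"
    using assms by (simp add: numeral_2_eq_2)
  moreover have "d dvd 2 \<longleftrightarrow> d = 1 \<or> d = 2" for d :: nat
    using dvd_imp_le[of d 2] by (auto simp: le_Suc_eq numeral_2_eq_2)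
  ultimately show ?thesis
    using ord_eq_1[OF assms] pow_eq_id[OF assms, of 2] by auto
qed

lemma comp_inv_eq_id_iff:
  assumes "bij g"
  shows "h \<circ> inv' g = id \<longleftrightarrow> h = g"
proof
  assume "h \<circ> inv' g = id"
  then have "(h \<circ> inv' g) \<circ> g = g"
    by simp
  then show "h = g"
    using assms by (simp add: comp_assoc bij_is_inj)
qed (use assms in \<open>simp add: bij_is_surj flip: surj_iff\<close>)

lemma comp_inv_involution_iff:
  assumes "bij g"
  shows "(h \<circ> inv' g) \<circ> (h \<circ> inv' g) = id \<longleftrightarrow> (\<forall>x j. g x = h j \<longrightarrow> h x = g j)"
proof -
  have "(h \<circ> inv' g) \<circ> (h \<circ> inv' g) = id \<longleftrightarrow> (\<forall>j. h (inv' g (h (inv' g (g j)))) = g j)"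
    using bij_is_surj[OF assms] by (auto simp: fun_eq_iff) (metis surj_f_inv_f)
  also have "\<dots> \<longleftrightarrow> (\<forall>j. h (inv' g (h j)) = g j)"
    using assms by (simp add: bij_is_inj)
  also have "\<dots> \<longleftrightarrow> (\<forall>x j. g x = h j \<longrightarrow> h x = g j)"
  proof -
    have "g x = h j \<longleftrightarrow> x = inv' g (h j)" for x j
      using bij_inv_eq_iff[OF assms] by metis
    then show ?thesis
      by auto
  qed
  finally show ?thesis .
qed

lemma permutes_exchange_condition_on:
  assumes g: "g permutes S" and h: "h permutes S"
  shows "(\<forall>x j. g x = h j \<longrightarrow> h x = g j) \<longleftrightarrow> (\<forall>x\<in>S. \<forall>j\<in>S. g x = h j \<longrightarrow> h x = g j)"
proof -
  have "h x = g j" if "g x = h j" "j \<notin> S" for x j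
  proof -
    have "h j = j" "g j = j"
      using that(2) g h by (simp_all add: permutes_not_in)
    then have "x \<notin> S"
      using that g by (metis permutes_in_image)
    then show ?thesis
      using that g h by (simp add: permutes_not_in)
  qed
  moreover have "x \<in> S" if "g x = h j" "j \<in> S" for x j
    using that g h by (metis permutes_in_image)
  ultimately show ?thesis
    by blast
qed

lemma cayley_adj_sym_group_order_2_iff:
  assumes g: "g \<in> carrier (sym_group n)" and h: "h \<in> carrier (sym_group n)"
  shows "cayley_adj (sym_group n) {k \<in> carrier (sym_group n). group.ord (sym_group n) k = 2} g h
     \<longleftrightarrow> g \<noteq> h \<and> (\<forall>x\<in>{1..n}. \<forall>j\<in>{1..n}. g x = h j \<longrightarrow> h x = g j)"
proof -
  interpret group "sym_group n"
    by (rule sym_group_is_group)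
  have g_perm: "g permutes {1..n}" and h_perm: "h permutes {1..n}"
    using g h by (simp_all add: sym_group_carrier)
  then have "bij g"
    by (simp add: permutes_bij)
  have "h \<otimes>\<^bsub>sym_group n\<^esub> inv\<^bsub>sym_group n\<^esub> g = h \<circ> inv' g"
    using g by (simp add: sym_group_mult)
  moreover have "h \<circ> inv' g \<in> carrier (sym_group n)"
    using permutes_compose[OF permutes_inv[OF g_perm] h_perm] by (simp add: sym_group_carrier)
  ultimately show ?thesis
    unfolding cayley_adj_def
    using ord_eq_2_iff comp_inv_eq_id_iff[OF \<open>bij g\<close>] comp_inv_involution_iff[OF \<open>bij g\<close>]
      permutes_exchange_condition_on[OF g_perm h_perm]
    by (auto simp: sym_group_mult sym_group_one)
qed

definition perm_of_list :: "nat list \<Rightarrow> nat \<Rightarrow> nat" where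
  "perm_of_list a i = (if 1 \<le> i \<and> i \<le> length a then a ! (i - 1) else i)"

lemma perm_of_list_permutes:
  assumes "a \<in> permutations_of_set {1..n}"
  shows "perm_of_list a permutes {1..n}"
proof (rule bij_imp_permutes)
  have length: "length a = n"
    using length_finite_permutations_of_set[OF assms] by simp
  have "perm_of_list a ` {1..n} = (!) a ` {..<n}"
    using length by (force simp: perm_of_list_def image_iff Bex_def intro: exI[of _ "Suc _"])
  then have image: "perm_of_list a ` {1..n} = {1..n}"
    using length permutations_of_setD(1)[OF assms] by (auto simp: set_conv_nth)
  then have "inj_on (perm_of_list a) {1..n}"
    by (simp add: eq_card_imp_inj_on)
  with image show "bij_betw (perm_of_list a) {1..n} {1..n}"
    by (simp add: bij_betw_def)
  show "perm_of_list a x = x" if "x \<notin> {1..n}" for x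
    using that length by (auto simp: perm_of_list_def)
qed

lemma inj_on_perm_of_list: "inj_on perm_of_list {a. length a = n}"
proof
  fix a b :: "nat list"
  assume "a \<in> {a. length a = n}" "b \<in> {a. length a = n}"
  then have length_eq: "length a = length b"
    by simp
  assume perm_eq: "perm_of_list a = perm_of_list b"
  have "a ! k = b ! k" if "k < length a" for k
  proof -
    have "perm_of_list a (Suc k) = perm_of_list b (Suc k)"
      by (simp add: perm_eq)
    then show ?thesis
      using that length_eq by (simp add: perm_of_list_def)
  qed
  with length_eq show "a = b"
    by (simp add: nth_equalityI)
qed

lemma bij_betw_perm_of_list:
  "bij_betw perm_of_list (permutations_of_set {1..n}) (carrier (sym_group n))"
proof -
  have "inj_on perm_of_list (permutations_of_set {1..n})"
    by (rule inj_on_subset[OF inj_on_perm_of_list])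
      (auto dest: length_finite_permutations_of_set)
  moreover have "perm_of_list ` permutations_of_set {1..n} \<subseteq> carrier (sym_group n)"
    by (rule image_subsetI) (unfold sym_group_carrier, erule perm_of_list_permutes)
  moreover have "card (permutations_of_set {1..n}) = card (carrier (sym_group n))"
    by (simp add: sym_group_card_carrier)
  moreover have "finite (carrier (sym_group n))"
    by (simp add: sym_group_def finite_permutations)
  ultimately show ?thesis
    by (simp add: bij_betw_def card_image card_subset_eq)
qed

lemma cayley_adj_sym_group_perm_of_list_iff:
  assumes a: "a \<in> permutations_of_set {1..n}" and b: "b \<in> permutations_of_set {1..n}"
  shows "cayley_adj (sym_group n) {k \<in> carrier (sym_group n). group.ord (sym_group n) k = 2}
      (perm_of_list a) (perm_of_list b)
    \<longleftrightarrow> a \<noteq> b \<and> (\<forall>x<n. \<forall>j<n. a ! x = b ! j \<longrightarrow> b ! x = a ! j)"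
proof -
  let ?p = "perm_of_list a" and ?q = "perm_of_list b"
  have length: "length a = n" "length b = n"
    using a b by (simp_all add: length_finite_permutations_of_set)
  have "?p \<in> carrier (sym_group n)" "?q \<in> carrier (sym_group n)"
    using a b bij_betw_perm_of_list[of n] by (auto simp: bij_betw_def)
  then have "cayley_adj (sym_group n) {k \<in> carrier (sym_group n). group.ord (sym_group n) k = 2} ?p ?q
      \<longleftrightarrow> ?p \<noteq> ?q \<and> (\<forall>x\<in>{1..n}. \<forall>j\<in>{1..n}. ?p x = ?q j \<longrightarrow> ?q x = ?p j)"
    by (rule cayley_adj_sym_group_order_2_iff)
  also have "\<dots> \<longleftrightarrow> a \<noteq> b \<and>
      (\<forall>x<n. \<forall>j<n. ?p (Suc x) = ?q (Suc j) \<longrightarrow> ?q (Suc x) = ?p (Suc j))"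
  proof -
    have "?p = ?q \<longleftrightarrow> a = b"
      using a b bij_betw_perm_of_list[of n] by (auto simp: bij_betw_def inj_on_eq_iff)
    moreover have "(\<forall>x\<in>{1..n}. P x) \<longleftrightarrow> (\<forall>x<n. P (Suc x))" for P
      unfolding image_Suc_lessThan[symmetric] by (simp add: lessThan_def)
    ultimately show ?thesis
      by simp
  qed
  also have "\<dots> \<longleftrightarrow> a \<noteq> b \<and> (\<forall>x<n. \<forall>j<n. a ! x = b ! j \<longrightarrow> b ! x = a ! j)"
    using length by (auto simp: perm_of_list_def)
  finally show ?thesis .
qed

text \<open>The \<open>i\<close>-th entry labels the \<open>i\<close>-th vector of \<open>Gp_vectors\<close>; each block of four
  consecutive entries is a coset of the Klein four-group, formed by the first block.\<close>

definition Gp_labels :: "nat list list" where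
  "Gp_labels =
    [[1,2,3,4],[2,1,4,3],[3,4,1,2],[4,3,2,1],
     [1,3,2,4],[2,4,1,3],[3,1,4,2],[4,2,3,1],
     [2,4,3,1],[1,3,4,2],[4,2,1,3],[3,1,2,4],
     [3,4,2,1],[4,3,1,2],[1,2,4,3],[2,1,3,4],
     [4,1,3,2],[3,2,4,1],[2,3,1,4],[1,4,2,3],
     [4,1,2,3],[3,2,1,4],[2,3,4,1],[1,4,3,2]]"

lemma set_Gp_labels: "set Gp_labels = permutations_of_set {1..4}"
proof (rule card_subset_eq)
  have "{1..4::nat} = {1,2,3,4}"
    by auto
  then show "set Gp_labels \<subseteq> permutations_of_set {1..4}"
    by (simp add: Gp_labels_def permutations_of_set_def insert_commute)
  show "card (set Gp_labels) = card (permutations_of_set {1..4::nat})"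
    by (simp add: Gp_labels_def fact_numeral)
qed simp

lemma Gp_adj_iff_Gp_labels:
  "\<forall>(u, a)\<in>set (zip Gp_vectors Gp_labels). \<forall>(v, b)\<in>set (zip Gp_vectors Gp_labels).
     Gp_adj u v \<longleftrightarrow> a \<noteq> b \<and> (\<forall>x<4. \<forall>j<4. a ! x = b ! j \<longrightarrow> b ! x = a ! j)"
proof -
  have "(\<forall>x<4. P x) \<longleftrightarrow> (\<forall>x\<in>{0,1,2,3}. P x)" for P :: "nat \<Rightarrow> bool"
    by (auto simp: numeral_eq_Suc less_Suc_eq)
  then show ?thesis
    by (simp add: Gp_vectors_def Gp_labels_def Gp_adj_def inner_list_def)
qed

lemma Gp_adj_iff_cayley_adj:
  assumes "(u, a) \<in> set (zip Gp_vectors Gp_labels)" and "(v, b) \<in> set (zip Gp_vectors Gp_labels)"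
  shows "Gp_adj u v \<longleftrightarrow> cayley_adj (sym_group 4) S4_order2 (perm_of_list a) (perm_of_list b)"
proof -
  have "a \<in> permutations_of_set {1..4}" "b \<in> permutations_of_set {1..4}"
    using set_zip_rightD[OF assms(1)] set_zip_rightD[OF assms(2)] by (simp_all add: set_Gp_labels)
  moreover have "Gp_adj u v \<longleftrightarrow> a \<noteq> b \<and> (\<forall>x<4. \<forall>j<4. a ! x = b ! j \<longrightarrow> b ! x = a ! j)"
    using bspec[OF bspec[OF Gp_adj_iff_Gp_labels assms(1), simplified] assms(2)] by simp
  ultimately show ?thesis
    unfolding S4_order2_def by (simp add: cayley_adj_sym_group_perm_of_list_iff)
qed

theorem mainTheorem2:
  shows "graph_iso Gp_V Gp_adj (carrier (sym_group 4)) (cayley_adj (sym_group 4) S4_order2)"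
proof (rule graph_iso_via_bij)
  show "bij_betw perm_of_list (set Gp_labels) (carrier (sym_group 4))"
    unfolding set_Gp_labels by (rule bij_betw_perm_of_list)
  have "distinct Gp_vectors" "distinct Gp_labels" "length Gp_vectors = length Gp_labels"
    by (simp_all add: Gp_vectors_def Gp_labels_def)
  then show "graph_iso Gp_V Gp_adj (set Gp_labels)
      (\<lambda>a b. cayley_adj (sym_group 4) S4_order2 (perm_of_list a) (perm_of_list b))"
    unfolding Gp_V_def using Gp_adj_iff_cayley_adj by (rule graph_iso_zip)
qed

end
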